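(* Let $v(0)\in\mathcal N^*$, $v(0)\ne0$, and let $E_0$ be its critical core. For all $w\ge1/m_1(0)$, $$\frac{m_1(0)}{m_2(0)}\frac1{w^2}\le E_0(w)\le\frac1{w^2}\qquad\text{and}\qquad\Big|\frac{dE_0}{dw}(w)\Big|\le4m_2(0)^2m_3(0)=:D.$$ Consequently $\sup_{w\ge1/m_1(0)}E_0(w)\le m_1(0)^2$, $\min_{1/m_1(0)\le y\le w}E_0(y)\ge\frac{m_1(0)}{m_2(0)}\frac1{w^2}$, and for $1/m_1(0)\le w_1\le w_2$, $\max_{[w_1,w_2]}E_0-\min_{[w_1,w_2]}E_0\le D(w_2-w_1)$.
   Context: $\mathcal N^*$: finitely supported sequences $v=(v_k)_{k\ge1}$ of nonnegative reals; $m_j(0)=\sum_kk^jv_k(0)$ for $j=1,2,3$. Critical core: with $U_0(x)=\sum_kv_k(0)(e^{-kx}-1)$, the function $E_0:(0,\infty)\to(0,\infty)$ is defined by $E_0\big(-1/U_0'(x)\big)=\frac{(-U_0'(x))^3}{U_0''(x)}$ for $x\in\mathbb R$ (the map $x\mapsto-1/U_0'(x)$ is a bijection $\mathbb R\to(0,\infty)$); equivalently $E_0=F_0'$ where $F_0(-1/U_0'(x))=-U_0(x)$. *)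

theory Defs
  imports "HOL-Analysis.Analysis"
begin

text \<open>A sequence v = (v_k)_{k>=1} is modelled as v :: nat => real; the entry v 0 is ignored.
  Membership in N*: finitely supported and nonnegative on indices k >= 1.\<close>

definition supp_seq :: "(nat \<Rightarrow> real) \<Rightarrow> nat set" where
  "supp_seq v = {k. 1 \<le> k \<and> v k \<noteq> 0}"

definition in_Nstar :: "(nat \<Rightarrow> real) \<Rightarrow> bool" where
  "in_Nstar v \<longleftrightarrow> finite (supp_seq v) \<and> (\<forall>k\<ge>1. 0 \<le> v k)"

definition moment :: "nat \<Rightarrow> (nat \<Rightarrow> real) \<Rightarrow> real" where
  "moment j v = (\<Sum>k\<in>supp_seq v. real k ^ j * v k)"

definition U0 :: "(nat \<Rightarrow> real) \<Rightarrow> real \<Rightarrow> real" where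
  "U0 v x = (\<Sum>k\<in>supp_seq v. v k * (exp (- real k * x) - 1))"

definition crit_core :: "(nat \<Rightarrow> real) \<Rightarrow> real \<Rightarrow> real" where
  "crit_core v w =
     (let x = (THE x. - 1 / deriv (U0 v) x = w)
      in (- deriv (U0 v) x) ^ 3 / deriv (deriv (U0 v)) x)"

end

theory Submission
  imports Defs
begin

text \<open>Writing \<open>S\<^sub>j(x) = \<Sum>\<^sub>k k\<^sup>j v\<^sub>k e\<^sup>-\<^sup>k\<^sup>x\<close>, we have \<open>U\<^sub>0' = -S\<^sub>1\<close> and \<open>U\<^sub>0'' = S\<^sub>2\<close>; every \<open>S\<^sub>j\<close> is
  positive and strictly decreasing from \<open>\<infinity>\<close> to \<open>0\<close>, with \<open>S\<^sub>j \<le> S\<^sub>j\<^sub>+\<^sub>1\<close> and \<open>S\<^sub>j(0) = m\<^sub>j\<close>.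
  Hence \<open>E\<^sub>0(w) = a\<^sup>3/b\<close> with \<open>a = S\<^sub>1(x) = 1/w\<close>, \<open>b = S\<^sub>2(x)\<close>, and \<open>w \<ge> 1/m\<^sub>1\<close> means \<open>x \<ge> 0\<close>.
  The upper bound is \<open>a \<le> b\<close>; the lower bound is the Chebyshev-type inequality
  \<open>m\<^sub>1 S\<^sub>2(x) \<le> m\<^sub>2 S\<^sub>1(x)\<close> for \<open>x \<ge> 0\<close>, obtained by symmetrising the double sum.
  By the inverse function rule \<open>E\<^sub>0'(w) = a\<^sup>5c/b\<^sup>3 - 3a\<^sup>4/b\<close> with \<open>c = S\<^sub>3(x)\<close>, and both terms
  are bounded using \<open>a \<le> b \<le> c\<close>, \<open>a \<le> m\<^sub>1\<close>, \<open>c \<le> m\<^sub>3\<close>. The remaining claims follow from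
  these bounds and the mean value theorem.\<close>

definition exp_moment :: "nat \<Rightarrow> (nat \<Rightarrow> real) \<Rightarrow> real \<Rightarrow> real" where
  "exp_moment j v x = (\<Sum>k\<in>supp_seq v. real k ^ j * v k * exp (- real k * x))"

lemma in_Nstar_supp:
  assumes "in_Nstar v"
  shows "finite (supp_seq v)" and "k \<in> supp_seq v \<Longrightarrow> 1 \<le> k \<and> 0 < v k"
  using assms unfolding in_Nstar_def supp_seq_def by (auto simp: less_le)

lemma has_real_derivative_exp_moment:
  "(exp_moment j v has_real_derivative - exp_moment (Suc j) v x) (at x)"
proof -
  have "((\<lambda>x. \<Sum>k\<in>supp_seq v. real k ^ j * v k * exp (- real k * x)) has_real_derivative
      - (\<Sum>k\<in>supp_seq v. real k ^ Suc j * v k * exp (- real k * x))) (at x)"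
    by (auto intro!: derivative_eq_intros sum.cong simp: algebra_simps simp flip: sum_negf)
  then show ?thesis by (simp add: exp_moment_def[abs_def])
qed

lemma exp_moment_zero: "exp_moment j v 0 = moment j v"
  unfolding exp_moment_def moment_def by simp

lemma exp_moment_pos:
  assumes "in_Nstar v" "supp_seq v \<noteq> {}"
  shows "0 < exp_moment j v x"
  unfolding exp_moment_def
proof (rule sum_pos)
  fix k assume "k \<in> supp_seq v"
  with in_Nstar_supp[OF assms(1)] have "1 \<le> k" "0 < v k" by auto
  then show "0 < real k ^ j * v k * exp (- real k * x)" by simp
qed (use in_Nstar_supp[OF assms(1)] assms(2) in auto)

lemma exp_moment_le_Suc:
  assumes "in_Nstar v"
  shows "exp_moment j v x \<le> exp_moment (Suc j) v x"
  unfolding exp_moment_def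
proof (rule sum_mono)
  fix k assume "k \<in> supp_seq v"
  with in_Nstar_supp[OF assms] have "1 \<le> k" "0 < v k" by auto
  then have "real k ^ j \<le> real k ^ Suc j" by (simp add: power_increasing)
  then show "real k ^ j * v k * exp (- real k * x) \<le> real k ^ Suc j * v k * exp (- real k * x)"
    using \<open>0 < v k\<close> by (intro mult_right_mono) auto
qed

lemma exp_moment_le_moment_exp:
  assumes "in_Nstar v" "0 \<le> x"
  shows "exp_moment j v x \<le> moment j v * exp (- x)"
  unfolding exp_moment_def moment_def sum_distrib_right
proof (rule sum_mono)
  fix k assume "k \<in> supp_seq v"
  with in_Nstar_supp[OF assms(1)] have "1 \<le> k" "0 < v k" by auto
  then have "exp (- real k * x) \<le> exp (- x)"
    using mult_right_mono[of 1 "real k" x] assms(2) by simp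
  then show "real k ^ j * v k * exp (- real k * x) \<le> real k ^ j * v k * exp (- x)"
    using \<open>0 < v k\<close> by (intro mult_left_mono) auto
qed

lemma exp_moment_le_moment:
  assumes "in_Nstar v" "0 \<le> x"
  shows "exp_moment j v x \<le> moment j v"
proof -
  have "0 \<le> moment j v"
    unfolding moment_def by (intro sum_nonneg) (fastforce dest: in_Nstar_supp(2)[OF assms(1)])
  then have "moment j v * exp (- x) \<le> moment j v"
    using assms(2) by (intro mult_left_le) auto
  with exp_moment_le_moment_exp[OF assms, of j] show ?thesis by linarith
qed

lemma exp_moment_ge_exp:
  assumes "in_Nstar v" "k \<in> supp_seq v" "x \<le> 0"
  shows "v k * exp (- x) \<le> exp_moment j v x"
proof -
  note supp = in_Nstar_supp[OF assms(1)]
  have "1 \<le> k" "0 < v k" using supp assms(2) by auto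
  then have "exp (- x) \<le> exp (- real k * x)"
    using mult_right_mono_neg[of 1 "real k" x] assms(3) by simp
  also have "\<dots> \<le> real k ^ j * exp (- real k * x)"
    using \<open>1 \<le> k\<close> by (intro mult_le_cancel_right1[THEN iffD2]) (simp add: one_le_power)
  finally have "v k * exp (- x) \<le> real k ^ j * v k * exp (- real k * x)"
    using \<open>0 < v k\<close> by (simp add: mult_left_mono mult.left_commute)
  also have "\<dots> \<le> exp_moment j v x"
    unfolding exp_moment_def using supp(1) assms(2)
    by (intro member_le_sum) (auto dest!: supp(2) intro!: mult_nonneg_nonneg)
  finally show ?thesis .
qed

lemma exp_moment_strict_decreasing:
  assumes "in_Nstar v" "supp_seq v \<noteq> {}" "x < y"
  shows "exp_moment j v y < exp_moment j v x"
  unfolding exp_moment_def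
proof (rule sum_strict_mono)
  show "finite (supp_seq v)" using in_Nstar_supp[OF assms(1)] by simp
  fix k assume "k \<in> supp_seq v"
  with in_Nstar_supp[OF assms(1)] have "1 \<le> k" "0 < v k" by auto
  then show "real k ^ j * v k * exp (- real k * y) < real k ^ j * v k * exp (- real k * x)"
    using assms(3) by (intro mult_strict_left_mono) auto
qed fact

lemma exp_moment_inj:
  assumes "in_Nstar v" "supp_seq v \<noteq> {}" "exp_moment j v x = exp_moment j v y"
  shows "x = y"
  using exp_moment_strict_decreasing[OF assms(1,2), of x y j]
    exp_moment_strict_decreasing[OF assms(1,2), of y x j] assms(3)
  by (cases x y rule: linorder_cases) auto

lemma exp_moment_surj:
  assumes "in_Nstar v" "supp_seq v \<noteq> {}" "0 < s"
  shows "\<exists>x. exp_moment j v x = s"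
proof -
  obtain k where k: "k \<in> supp_seq v" using assms(2) by auto
  have vk: "0 < v k" using in_Nstar_supp[OF assms(1)] k by auto
  have m: "0 < moment j v" using exp_moment_pos[OF assms(1,2)] by (simp flip: exp_moment_zero)
  define a where "a = - \<bar>ln (s / v k)\<bar>"
  define b where "b = \<bar>ln (moment j v / s)\<bar>"
  have "a \<le> b" "a \<le> 0" "0 \<le> b" unfolding a_def b_def by auto
  have "s / v k \<le> exp (- a)"
    using vk assms(3) unfolding a_def by (metis abs_ge_self divide_pos_pos exp_le_cancel_iff exp_ln minus_minus)
  then have "s \<le> v k * exp (- a)" using vk by (simp add: pos_divide_le_eq mult.commute)
  also have "\<dots> \<le> exp_moment j v a" by (rule exp_moment_ge_exp[OF assms(1) k \<open>a \<le> 0\<close>])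
  finally have sa: "s \<le> exp_moment j v a" .
  have "exp_moment j v b \<le> moment j v * exp (- b)"
    by (rule exp_moment_le_moment_exp[OF assms(1) \<open>0 \<le> b\<close>])
  also have "\<dots> \<le> s"
  proof -
    have "moment j v / s \<le> exp b"
      using m assms(3) unfolding b_def by (metis abs_ge_self divide_pos_pos exp_le_cancel_iff exp_ln)
    then show ?thesis using m assms(3) by (simp add: exp_minus pos_divide_le_eq field_simps)
  qed
  finally have sb: "exp_moment j v b \<le> s" .
  have "continuous_on {a..b} (exp_moment j v)"
    using has_real_derivative_exp_moment
    by (intro continuous_at_imp_continuous_on) (blast intro: DERIV_isCont)
  from IVT2'[OF sb sa \<open>a \<le> b\<close> this] show ?thesis by blast
qed

lemma moment_pos:
  assumes "in_Nstar v" "supp_seq v \<noteq> {}"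
  shows "0 < moment j v"
  using exp_moment_pos[OF assms] by (simp flip: exp_moment_zero)

lemma moment_le_Suc:
  assumes "in_Nstar v"
  shows "moment j v \<le> moment (Suc j) v"
  using exp_moment_le_Suc[OF assms] by (simp flip: exp_moment_zero)

lemma pos_if_inverse_moment_le:
  assumes "in_Nstar v" "supp_seq v \<noteq> {}" "1 / moment 1 v \<le> w"
  shows "0 < w"
  using moment_pos[OF assms(1,2), of 1] assms(3) by (smt (verit) divide_pos_pos)

lemma moment_mul_exp_moment_le:
  assumes "in_Nstar v" "0 \<le> x"
  shows "moment 1 v * exp_moment 2 v x \<le> moment 2 v * exp_moment 1 v x"
proof -
  define P where "P = supp_seq v"
  define e where "e k = exp (- real k * x)" for k :: nat
  define T where "T j k = real j * real k * v j * v k * (real k - real j) * e k" for j k :: nat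
  have "moment 1 v * exp_moment 2 v x - moment 2 v * exp_moment 1 v x = (\<Sum>j\<in>P. \<Sum>k\<in>P. T j k)"
    unfolding moment_def exp_moment_def sum_product P_def[symmetric] sum_subtractf[symmetric]
    by (intro sum.cong refl) (simp add: T_def e_def algebra_simps power2_eq_square)
  also have "\<dots> = ((\<Sum>j\<in>P. \<Sum>k\<in>P. T j k) + (\<Sum>j\<in>P. \<Sum>k\<in>P. T k j)) / 2"
    by (subst (2) sum.swap) simp
  also have "\<dots> \<le> 0"
  proof -
    have "T j k + T k j \<le> 0" if "j \<in> P" "k \<in> P" for j k
    proof -
      have "0 < v j" "0 < v k" using in_Nstar_supp[OF assms(1)] that unfolding P_def by auto
      moreover have "(real k - real j) * (e k - e j) \<le> 0"
        using assms(2) unfolding e_def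
        by (cases "j \<le> k") (auto intro: mult_nonneg_nonpos mult_nonpos_nonneg simp: mult_right_mono)
      moreover have "T j k + T k j = (real j * real k * v j * v k) * ((real k - real j) * (e k - e j))"
        unfolding T_def by (simp add: algebra_simps)
      ultimately show ?thesis by (simp add: mult_nonneg_nonpos)
    qed
    then show ?thesis by (simp add: sum.distrib[symmetric] sum_nonpos)
  qed
  finally show ?thesis by simp
qed

lemma deriv_U0:
  "deriv (U0 v) = (\<lambda>x. - exp_moment 1 v x)"
  "deriv (deriv (U0 v)) = exp_moment 2 v"
proof -
  have "(U0 v has_real_derivative - exp_moment 1 v x) (at x)" for x
  proof -
    have "((\<lambda>x. \<Sum>k\<in>supp_seq v. v k * (exp (- real k * x) - 1)) has_real_derivative
        - (\<Sum>k\<in>supp_seq v. real k ^ 1 * v k * exp (- real k * x))) (at x)"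
      by (auto intro!: derivative_eq_intros sum.cong simp: algebra_simps simp flip: sum_negf)
    then show ?thesis by (simp add: U0_def[abs_def] exp_moment_def)
  qed
  then show 1: "deriv (U0 v) = (\<lambda>x. - exp_moment 1 v x)" by (intro ext DERIV_imp_deriv)
  show "deriv (deriv (U0 v)) = exp_moment 2 v"
    unfolding 1 using has_real_derivative_exp_moment[of 1 v]
    by (intro ext DERIV_imp_deriv) (auto intro!: derivative_eq_intros simp: numeral_2_eq_2)
qed

definition crit_point :: "(nat \<Rightarrow> real) \<Rightarrow> real \<Rightarrow> real" where
  "crit_point v w = (THE x. 1 / exp_moment 1 v x = w)"

lemma crit_core_eq:
  "crit_core v w = exp_moment 1 v (crit_point v w) ^ 3 / exp_moment 2 v (crit_point v w)"
proof -
  have "deriv (\<lambda>x. - exp_moment 1 v x) = exp_moment 2 v" using deriv_U0[of v] by simp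
  then show ?thesis by (simp add: crit_core_def crit_point_def deriv_U0(1) Let_def)
qed

lemma exp_moment_crit_point:
  assumes "in_Nstar v" "supp_seq v \<noteq> {}" "0 < w"
  shows "exp_moment 1 v (crit_point v w) = 1 / w"
proof -
  obtain x where x: "exp_moment 1 v x = 1 / w"
    using exp_moment_surj[OF assms(1,2)] assms(3) by (meson zero_less_divide_1_iff)
  have "crit_point v w = x"
    unfolding crit_point_def
  proof (rule the_equality)
    show "1 / exp_moment 1 v x = w" using x by simp
    show "y = x" if "1 / exp_moment 1 v y = w" for y
    proof (rule exp_moment_inj[OF assms(1,2)])
      show "exp_moment 1 v y = exp_moment 1 v x"
        using that x by (metis inverse_eq_divide inverse_inverse_eq)
    qed
  qed
  with x show ?thesis by simp
qed

lemma crit_point_inverse: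
  assumes "in_Nstar v" "supp_seq v \<noteq> {}"
  shows "crit_point v (1 / exp_moment 1 v x) = x"
  unfolding crit_point_def
  by (rule the_equality) (auto dest: exp_moment_inj[OF assms])

lemma crit_point_nonneg:
  assumes "in_Nstar v" "supp_seq v \<noteq> {}" "1 / moment 1 v \<le> w"
  shows "0 \<le> crit_point v w"
proof (rule ccontr)
  have m: "0 < moment 1 v" by (rule moment_pos[OF assms(1,2)])
  have "0 < w" by (rule pos_if_inverse_moment_le[OF assms])
  assume "\<not> 0 \<le> crit_point v w"
  then have "exp_moment 1 v 0 < exp_moment 1 v (crit_point v w)"
    by (intro exp_moment_strict_decreasing[OF assms(1,2)]) simp
  then have "moment 1 v < 1 / w"
    using exp_moment_zero[of 1 v] exp_moment_crit_point[OF assms(1,2) \<open>0 < w\<close>] by linarith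
  then show False using assms(3) m \<open>0 < w\<close> by (simp add: field_simps)
qed

lemma crit_core_bounds:
  assumes "in_Nstar v" "supp_seq v \<noteq> {}" "1 / moment 1 v \<le> w"
  shows "moment 1 v / moment 2 v * (1 / w^2) \<le> crit_core v w"
    and "crit_core v w \<le> 1 / w^2"
proof -
  define x where "x = crit_point v w"
  define a where "a = exp_moment 1 v x"
  define b where "b = exp_moment 2 v x"
  have "0 < w" by (rule pos_if_inverse_moment_le[OF assms])
  have E: "crit_core v w = a^3 / b" by (simp add: crit_core_eq a_def b_def x_def)
  have w: "1 / w^2 = a^2"
    using exp_moment_crit_point[OF assms(1,2) \<open>0 < w\<close>] by (simp add: a_def x_def power_one_over)
  have "0 < a" unfolding a_def by (rule exp_moment_pos[OF assms(1,2)])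
  have "a \<le> b" unfolding a_def b_def using exp_moment_le_Suc[OF assms(1), of 1] by (simp add: numeral_2_eq_2)
  have "0 < moment 2 v" by (rule moment_pos[OF assms(1,2)])
  have "moment 1 v * b \<le> moment 2 v * a"
    unfolding a_def b_def x_def
    by (rule moment_mul_exp_moment_le[OF assms(1) crit_point_nonneg[OF assms]])
  then have "moment 1 v * b * a^2 \<le> moment 2 v * a * a^2" by (intro mult_right_mono) auto
  then show "moment 1 v / moment 2 v * (1 / w^2) \<le> crit_core v w"
    using \<open>0 < moment 2 v\<close> \<open>0 < a\<close> \<open>a \<le> b\<close> unfolding E w
    by (simp add: field_simps power_numeral_reduce)
  have "a^3 / b \<le> a^3 / a" using \<open>0 < a\<close> \<open>a \<le> b\<close> by (intro divide_left_mono) auto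
  then show "crit_core v w \<le> 1 / w^2"
    using \<open>0 < a\<close> unfolding E w by (simp add: power_numeral_reduce)
qed

lemma has_real_derivative_crit_point:
  assumes "in_Nstar v" "supp_seq v \<noteq> {}" "0 < w"
  defines "x \<equiv> crit_point v w"
  shows "(crit_point v has_real_derivative exp_moment 1 v x ^ 2 / exp_moment 2 v x) (at w)"
proof -
  define f where "f x = 1 / exp_moment 1 v x" for x
  have fder: "(f has_real_derivative exp_moment 2 v y / exp_moment 1 v y ^ 2) (at y)" for y
  proof -
    have "((\<lambda>x. inverse (exp_moment 1 v x)) has_real_derivative
        - (- exp_moment 2 v y * inverse (exp_moment 1 v y ^ Suc (Suc 0)))) (at y)"
      using DERIV_inverse_fun[OF has_real_derivative_exp_moment[of 1 v y]]
        exp_moment_pos[OF assms(1,2), of 1 y]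
      by (simp add: numeral_2_eq_2)
    then show ?thesis by (simp add: f_def[abs_def] divide_inverse power2_eq_square)
  qed
  have inv: "crit_point v (f y) = y" for y
    unfolding f_def by (rule crit_point_inverse[OF assms(1,2)])
  have fx: "f x = w"
    unfolding f_def x_def using exp_moment_crit_point[OF assms(1,2,3)] assms(3) by simp
  have cont: "isCont (crit_point v) w"
    using isCont_inverse_function[where d=1 and f=f and x=x, OF _ inv] fder DERIV_isCont fx
    by fastforce
  have "(crit_point v has_real_derivative inverse (exp_moment 2 v x / exp_moment 1 v x ^ 2)) (at w)"
  proof (rule DERIV_inverse_function[where f=f and a=0 and b="w+1", OF _ _ _ _ _ cont])
    show "(f has_real_derivative exp_moment 2 v x / exp_moment 1 v x ^ 2) (at (crit_point v w))"
      using fder[of x] by (simp add: x_def)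
    show "exp_moment 2 v x / exp_moment 1 v x ^ 2 \<noteq> 0"
      using exp_moment_pos[OF assms(1,2)] by (simp add: less_imp_neq[symmetric])
    show "f (crit_point v y) = y" if "0 < y" "y < w + 1" for y
      using exp_moment_crit_point[OF assms(1,2) \<open>0 < y\<close>] \<open>0 < y\<close> by (simp add: f_def)
  qed (use assms(3) in auto)
  then show ?thesis by simp
qed

lemma has_real_derivative_crit_core:
  assumes "in_Nstar v" "supp_seq v \<noteq> {}" "0 < w"
  defines "x \<equiv> crit_point v w"
  defines "a \<equiv> exp_moment 1 v x" and "b \<equiv> exp_moment 2 v x" and "c \<equiv> exp_moment 3 v x"
  shows "(crit_core v has_real_derivative a^5 * c / b^3 - 3 * a^4 / b) (at w)"
proof -
  define F where "F y = exp_moment 1 v y ^ 3 / exp_moment 2 v y" for y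
  have "0 < a" "0 < b" unfolding a_def b_def using exp_moment_pos[OF assms(1,2)] by auto
  have "(F has_real_derivative
      (3 * a^2 * (- b) * b - a^3 * (- c)) / (b * b)) (at x)"
    unfolding F_def[abs_def] a_def b_def c_def
    using has_real_derivative_exp_moment[of 1 v x] has_real_derivative_exp_moment[of 2 v x]
      \<open>0 < b\<close>[unfolded b_def]
    by (auto intro!: derivative_eq_intros simp: numeral_2_eq_2 numeral_3_eq_3)
  from DERIV_chain2[OF this[unfolded x_def] has_real_derivative_crit_point[OF assms(1-3)]]
  have "((\<lambda>w. F (crit_point v w)) has_real_derivative
      (3 * a^2 * (- b) * b - a^3 * (- c)) / (b * b) * (a^2 / b)) (at w)"
    by (simp add: a_def b_def x_def)
  moreover have "(3 * a^2 * (- b) * b - a^3 * (- c)) / (b * b) * (a^2 / b) = a^5 * c / b^3 - 3 * a^4 / b"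
    using \<open>0 < b\<close> by (simp add: field_simps power_numeral_reduce)
  moreover have "(\<lambda>w. F (crit_point v w)) = crit_core v"
    by (simp add: F_def crit_core_eq fun_eq_iff)
  ultimately show ?thesis by simp
qed

lemma crit_core_slope_bound:
  fixes a b c m1 m2 m3 :: real
  assumes "0 < a" "a \<le> b" "b \<le> c" "a \<le> m1" "c \<le> m3" "m1 \<le> m2" "m2 \<le> m3"
  shows "\<bar>a^5 * c / b^3 - 3 * a^4 / b\<bar> \<le> 4 * m2^2 * m3"
proof -
  have "0 < b" using assms by simp
  have "a^5 * c / b^3 \<le> a^2 * c"
  proof -
    have "a^3 * (a^2 * c) \<le> b^3 * (a^2 * c)"
      using assms by (intro mult_right_mono power_mono) auto
    then show ?thesis using \<open>0 < b\<close> by (simp add: divide_le_eq power_numeral_reduce algebra_simps)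
  qed
  moreover have "3 * a^4 / b \<le> 3 * a^3"
    using assms \<open>0 < b\<close> by (simp add: divide_le_eq power_numeral_reduce mult_left_mono)
  moreover have "0 \<le> a^5 * c / b^3" "0 \<le> 3 * a^4 / b" using assms by auto
  moreover have "a^2 * c \<le> m2^2 * m3"
    using assms by (intro mult_mono power_mono) auto
  moreover have "a^3 \<le> m2^2 * m3"
  proof -
    have "a^3 \<le> m2^3" using assms by (intro power_mono) auto
    also have "\<dots> = m2^2 * m2" by (simp add: power_numeral_reduce)
    also have "\<dots> \<le> m2^2 * m3" using assms by (intro mult_left_mono) auto
    finally show ?thesis .
  qed
  ultimately show ?thesis unfolding abs_le_iff by (intro conjI) linarith+
qed

lemma crit_core_deriv_bound:
  assumes "in_Nstar v" "supp_seq v \<noteq> {}" "1 / moment 1 v \<le> w"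
  shows "crit_core v differentiable (at w)"
    and "\<bar>deriv (crit_core v) w\<bar> \<le> 4 * (moment 2 v)^2 * moment 3 v"
proof -
  define x where "x = crit_point v w"
  have "0 < w" by (rule pos_if_inverse_moment_le[OF assms])
  note E' = has_real_derivative_crit_core[OF assms(1,2) \<open>0 < w\<close>, folded x_def]
  show "crit_core v differentiable (at w)" using E' real_differentiable_def by blast
  have "0 \<le> x" unfolding x_def by (rule crit_point_nonneg[OF assms])
  show "\<bar>deriv (crit_core v) w\<bar> \<le> 4 * (moment 2 v)^2 * moment 3 v"
    unfolding DERIV_imp_deriv[OF E']
    using exp_moment_pos[OF assms(1,2)] exp_moment_le_Suc[OF assms(1), of 1 x]
      exp_moment_le_Suc[OF assms(1), of 2 x] moment_le_Suc[OF assms(1), of 1]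
      moment_le_Suc[OF assms(1), of 2]
      exp_moment_le_moment[OF assms(1) \<open>0 \<le> x\<close>]
    by (intro crit_core_slope_bound) (auto simp: numeral_2_eq_2 numeral_3_eq_3)
qed

lemma abs_diff_le_of_deriv_bound:
  fixes E :: "real \<Rightarrow> real"
  assumes "\<And>t. y \<le> t \<Longrightarrow> t \<le> z \<Longrightarrow> E differentiable (at t) \<and> \<bar>deriv E t\<bar> \<le> K"
    and "y \<le> z"
  shows "\<bar>E z - E y\<bar> \<le> K * (z - y)"
proof (cases "y = z")
  case False
  then have "y < z" using assms(2) by simp
  have "\<And>t. y \<le> t \<Longrightarrow> t \<le> z \<Longrightarrow> (E has_real_derivative deriv E t) (at t)"
    using assms(1) DERIV_deriv_iff_real_differentiable by blast
  from MVT2[OF \<open>y < z\<close> this] obtain t where t: "y < t" "t < z" "E z - E y = (z - y) * deriv E t"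
    by blast
  have "\<bar>deriv E t\<bar> \<le> K" using assms(1) t by force
  then show ?thesis
    using t \<open>y < z\<close> by (simp add: abs_mult mult.commute mult_left_mono)
qed simp

lemma SUP_minus_INF_le:
  fixes E :: "'a \<Rightarrow> real"
  assumes "A \<noteq> {}" and "\<And>y z. y \<in> A \<Longrightarrow> z \<in> A \<Longrightarrow> E y \<le> E z + d"
  shows "(SUP y\<in>A. E y) - (INF y\<in>A. E y) \<le> d"
proof -
  have "(SUP y\<in>A. E y) - d \<le> (INF y\<in>A. E y)"
  proof (rule cINF_greatest[OF assms(1)])
    fix z assume "z \<in> A"
    then have "(SUP y\<in>A. E y) \<le> E z + d"
      using assms(2) by (intro cSUP_least[OF assms(1)]) auto
    then show "(SUP y\<in>A. E y) - d \<le> E z" by simp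
  qed
  then show ?thesis by simp
qed

lemma SUP_minus_INF_le_of_deriv_bound:
  fixes E :: "real \<Rightarrow> real"
  assumes "w1 \<le> w2"
    and "\<And>t. w1 \<le> t \<Longrightarrow> t \<le> w2 \<Longrightarrow> E differentiable (at t) \<and> \<bar>deriv E t\<bar> \<le> K"
  shows "(SUP y\<in>{w1..w2}. E y) - (INF y\<in>{w1..w2}. E y) \<le> K * (w2 - w1)"
proof (rule SUP_minus_INF_le)
  have "0 \<le> K" using assms(2)[of w1] assms(1) by force
  fix y z assume "y \<in> {w1..w2}" "z \<in> {w1..w2}"
  then have "\<bar>E z - E y\<bar> \<le> K * \<bar>z - y\<bar>"
    using abs_diff_le_of_deriv_bound[of y z E K] abs_diff_le_of_deriv_bound[of z y E K] assms(2)
    by (cases "y \<le> z") (auto simp: abs_minus_commute)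
  moreover have "K * \<bar>z - y\<bar> \<le> K * (w2 - w1)"
    using \<open>0 \<le> K\<close> \<open>y \<in> {w1..w2}\<close> \<open>z \<in> {w1..w2}\<close> by (intro mult_left_mono) auto
  ultimately show "E y \<le> E z + K * (w2 - w1)" by linarith
qed (use assms(1) in simp)

theorem lemma6:
  fixes v :: "nat \<Rightarrow> real"
  assumes "in_Nstar v" and "supp_seq v \<noteq> {}"
  defines "m1 \<equiv> moment 1 v" and "m2 \<equiv> moment 2 v" and "m3 \<equiv> moment 3 v"
      and "E0 \<equiv> crit_core v"
      and "D \<equiv> 4 * (moment 2 v)^2 * moment 3 v"
  shows "(\<forall>w \<ge> 1 / m1.
            m1 / m2 * (1 / w^2) \<le> E0 w \<and> E0 w \<le> 1 / w^2 \<and>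
            E0 differentiable (at w) \<and> \<bar>deriv E0 w\<bar> \<le> D)
       \<and> (SUP w\<in>{1/m1..}. E0 w) \<le> m1^2
       \<and> (\<forall>w \<ge> 1 / m1. (INF y\<in>{1/m1..w}. E0 y) \<ge> m1 / m2 * (1 / w^2))
       \<and> (\<forall>w1 w2. 1 / m1 \<le> w1 \<and> w1 \<le> w2 \<longrightarrow>
            (SUP y\<in>{w1..w2}. E0 y) - (INF y\<in>{w1..w2}. E0 y) \<le> D * (w2 - w1))"
proof -
  note bounds = crit_core_bounds[OF assms(1,2)] crit_core_deriv_bound[OF assms(1,2)]
  have m: "0 < m1" "0 < m2" using moment_pos[OF assms(1,2)] by (auto simp: m1_def m2_def)
  have pos: "0 < w" if "1 / m1 \<le> w" for w
    using pos_if_inverse_moment_le[OF assms(1,2)] that by (simp add: m1_def)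
  have "(SUP w\<in>{1/m1..}. E0 w) \<le> m1^2"
  proof (rule cSUP_least)
    fix w assume w: "w \<in> {1/m1..}"
    then have "0 < w" "1 / w \<le> m1" using m pos[of w] by (auto simp: field_simps)
    then have "1 / w^2 \<le> m1^2" unfolding power_one_over[symmetric] by (intro power_mono) auto
    with w show "E0 w \<le> m1^2" using bounds by (force simp: E0_def m1_def)
  qed simp
  moreover have "(INF y\<in>{1/m1..w}. E0 y) \<ge> m1 / m2 * (1 / w^2)" if "1 / m1 \<le> w" for w
  proof (rule cINF_greatest)
    fix y assume y: "y \<in> {1/m1..w}"
    then have "0 < y" using pos[of y] by simp
    then have "m1 / m2 * (1 / w^2) \<le> m1 / m2 * (1 / y^2)"
      using m y by (intro mult_left_mono divide_left_mono power_mono) auto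
    also have "\<dots> \<le> E0 y" using bounds y by (simp add: E0_def m1_def m2_def)
    finally show "m1 / m2 * (1 / w^2) \<le> E0 y" .
  qed (use that in simp)
  moreover have "(SUP y\<in>{w1..w2}. E0 y) - (INF y\<in>{w1..w2}. E0 y) \<le> D * (w2 - w1)"
    if "1 / m1 \<le> w1" "w1 \<le> w2" for w1 w2
    using that bounds by (intro SUP_minus_INF_le_of_deriv_bound) (auto simp: E0_def D_def m1_def)
  ultimately show ?thesis using bounds by (auto simp: E0_def D_def m1_def m2_def)
qed

end
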